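(* Fix $h\in[H]$ and a factored model $M\in\mathcal M$. Sample a dataset $\{(x_h^{(i)},a_h^{(i)},r_h^{(i)},x_{h+1}^{(i)})\}_{i=1}^n$ i.i.d. with $x_h^{(i)}\sim\pi_M$, $a_h^{(i)}\sim U(\mathcal A)$, $(r_h^{(i)},x_{h+1}^{(i)})\sim M^\star_h$. Fix $\phi>0$ and $\delta>0$. If $n\ge\frac{8d^2(L\log(8d|\mathcal O|/\phi)+\log(2/\delta))}{\phi^2}$, then with probability at least $1-\delta$, for all $M'\in\mathcal M$, $|\hat{\mathcal W}_F(M,M',h)-\mathcal W_F(M,M',h)|\le\phi$.
   Context: Factored MDP setting: $\mathcal O$ finite, $\mathcal X=[H]\times\mathcal O^d$ layered by time, $|\mathcal A|=K$; parent sets $\mathrm{pa}_i\subseteq[d]$ known; transitions $P(x'|x,a)=\prod_{i=1}^dP^{(i)}[x'[i]\mid x[\mathrm{pa}_i],a,h]$ for $x\in\mathcal X_h$; known reward function $R^\star$ shared by all models. $\mathcal M$ is the (infinite) set of all models with reward $R^\star$ and transitions factorizing with these parent sets; the true model $M^\star\in\mathcal M$. $L=\sum_{i=1}^dHK|\mathcal O|^{1+|\mathrm{pa}_i|}$. For a model $M$, $\pi_M$ is its greedy optimal policy; $x_h\sim\pi$ is the step-$h$ context when running $\pi$ in the true MDP; $(r,x')\sim M_h$ means $r\sim R^\star(x_h,a_h)$, $x'\sim P(x_h,a_h)$. Test class $\mathcal F=\{g_1+\dots+g_d: g_i\in\mathcal G_i\}$ where $\mathcal G_i$ is the set of all functions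 of $(x,a,r,x')$ depending only on $(x[\mathrm{pa}_i],a,h,x'[i])$ (with $h$ the time step of $x$) and taking values in $\{-1,1\}$. $\mathcal W_F(M,M',h)=\max_{f\in\mathcal F}\mathbb E_{x_h\sim\pi_M,a_h\sim U(\mathcal A)}[\mathbb E_{(r,x')\sim M'_h}f(x_h,a_h,r,x')-\mathbb E_{(r,x')\sim M^\star_h}f(x_h,a_h,r,x')]$, and $\hat{\mathcal W}_F(M,M',h)=\max_{f\in\mathcal F}\frac1n\sum_{i=1}^n\big(\mathbb E_{(r,x')\sim M'_h}f(x_h^{(i)},a_h^{(i)},r,x')-f(x_h^{(i)},a_h^{(i)},r_h^{(i)},x_{h+1}^{(i)})\big)$. *)

theory Defs
  imports "HOL-Probability.Probability" "HOL-Probability.Product_PMF"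
begin

text \<open>
Observations: finite type 'o. Factors (coordinates) [d]: finite type 'd,
so d = CARD('d). A context at time step h is
the pair (h, x) with x :: 'd \<Rightarrow> 'o; time steps are 1..H.
A factored model is given by its factor kernels
  M i h y a = P^(i)[ . | y, a, h ]
where y is the restriction x[pa_i] of the current observation vector; the full
transition is the product over the factors. Every such M (with the fixed reward R)
is an element of the model class; conversely every element arises this way.
Rewards: R h x a is the (known, shared) reward distribution.
\<close>

type_synonym ('d,'o,'a) model = "'d \<Rightarrow> nat \<Rightarrow> ('d \<Rightarrow> 'o) \<Rightarrow> 'a \<Rightarrow> 'o pmf"
type_synonym ('d,'o,'a) rewardfn = "nat \<Rightarrow> ('d \<Rightarrow> 'o) \<Rightarrow> 'a \<Rightarrow> real pmf"
type_synonym ('d,'o,'a) policy = "nat \<Rightarrow> ('d \<Rightarrow> 'o) \<Rightarrow> 'a"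

definition proj :: "'d set \<Rightarrow> ('d \<Rightarrow> 'o) \<Rightarrow> ('d \<Rightarrow> 'o)" where
  "proj A x = restrict x A"

definition trans :: "('d::finite \<Rightarrow> 'd set) \<Rightarrow> ('d,'o,'a) model \<Rightarrow> nat \<Rightarrow> ('d \<Rightarrow> 'o) \<Rightarrow> 'a \<Rightarrow> ('d \<Rightarrow> 'o) pmf" where
  "trans pa M h x a = Pi_pmf UNIV undefined (\<lambda>i. M i h (proj (pa i) x) a)"

definition step_pmf :: "('d::finite \<Rightarrow> 'd set) \<Rightarrow> ('d,'o,'a) rewardfn \<Rightarrow> ('d,'o,'a) model
    \<Rightarrow> nat \<Rightarrow> ('d \<Rightarrow> 'o) \<Rightarrow> 'a \<Rightarrow> (real \<times> ('d \<Rightarrow> 'o)) pmf" where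
  "step_pmf pa R M h x a = pair_pmf (R h x a) (trans pa M h x a)"

definition mean_reward :: "('d,'o,'a) rewardfn \<Rightarrow> nat \<Rightarrow> ('d \<Rightarrow> 'o) \<Rightarrow> 'a \<Rightarrow> real" where
  "mean_reward R h x a = measure_pmf.expectation (R h x a) (\<lambda>r. r)"

text \<open>Optimal value with k steps remaining, starting at time step h (model M).\<close>
fun Vrem :: "('d::finite \<Rightarrow> 'd set) \<Rightarrow> ('d,'o::finite,'a::finite) rewardfn \<Rightarrow> ('d,'o,'a) model
    \<Rightarrow> nat \<Rightarrow> nat \<Rightarrow> ('d \<Rightarrow> 'o) \<Rightarrow> real" where
  "Vrem pa R M 0 h x = 0"
| "Vrem pa R M (Suc k) h x =
     (MAX a\<in>UNIV. mean_reward R h x a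
        + measure_pmf.expectation (trans pa M h x a) (Vrem pa R M k (Suc h)))"

definition Qopt :: "nat \<Rightarrow> ('d::finite \<Rightarrow> 'd set) \<Rightarrow> ('d,'o::finite,'a::finite) rewardfn \<Rightarrow> ('d,'o,'a) model
    \<Rightarrow> nat \<Rightarrow> ('d \<Rightarrow> 'o) \<Rightarrow> 'a \<Rightarrow> real" where
  "Qopt H pa R M h x a = mean_reward R h x a
     + measure_pmf.expectation (trans pa M h x a) (Vrem pa R M (H - h) (Suc h))"

definition greedy_optimal :: "nat \<Rightarrow> ('d::finite \<Rightarrow> 'd set) \<Rightarrow> ('d,'o::finite,'a::finite) rewardfn
    \<Rightarrow> ('d,'o,'a) model \<Rightarrow> ('d,'o,'a) policy \<Rightarrow> bool" where
  "greedy_optimal H pa R M \<pi> \<longleftrightarrow>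
     (\<forall>h\<in>{1..H}. \<forall>x. \<forall>a. Qopt H pa R M h x a \<le> Qopt H pa R M h x (\<pi> h x))"

text \<open>Distribution of x_{k+1} when running \<pi> in the true model Mstar from initial
distribution mu0 of x_1.\<close>
fun roll :: "('d::finite \<Rightarrow> 'd set) \<Rightarrow> ('d \<Rightarrow> 'o) pmf \<Rightarrow> ('d,'o,'a) model \<Rightarrow> ('d,'o,'a) policy
    \<Rightarrow> nat \<Rightarrow> ('d \<Rightarrow> 'o) pmf" where
  "roll pa mu0 Mstar \<pi> 0 = mu0"
| "roll pa mu0 Mstar \<pi> (Suc k) =
     bind_pmf (roll pa mu0 Mstar \<pi> k) (\<lambda>x. trans pa Mstar (Suc k) x (\<pi> (Suc k) x))"

definition state_dist :: "('d::finite \<Rightarrow> 'd set) \<Rightarrow> ('d \<Rightarrow> 'o) pmf \<Rightarrow> ('d,'o,'a) model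
    \<Rightarrow> ('d,'o,'a) policy \<Rightarrow> nat \<Rightarrow> ('d \<Rightarrow> 'o) pmf" where
  "state_dist pa mu0 Mstar \<pi> h = roll pa mu0 Mstar \<pi> (h - 1)"

definition testF :: "('d::finite \<Rightarrow> 'd set)
    \<Rightarrow> (nat \<Rightarrow> ('d \<Rightarrow> 'o) \<Rightarrow> 'a \<Rightarrow> real \<Rightarrow> ('d \<Rightarrow> 'o) \<Rightarrow> real) set" where
  "testF pa = {f. \<exists>g :: 'd \<Rightarrow> nat \<Rightarrow> ('d \<Rightarrow> 'o) \<Rightarrow> 'a \<Rightarrow> 'o \<Rightarrow> real.
       (\<forall>i h y a ob. g i h y a ob \<in> {-1, 1}) \<and>
       f = (\<lambda>h x a r x'. \<Sum>i\<in>UNIV. g i h (proj (pa i) x) a (x' i))}"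

definition W_F :: "('d::finite \<Rightarrow> 'd set) \<Rightarrow> ('d,'o,'a::finite) rewardfn \<Rightarrow> ('d \<Rightarrow> 'o) pmf
    \<Rightarrow> ('d,'o,'a) model \<Rightarrow> ('d,'o,'a) policy \<Rightarrow> ('d,'o,'a) model \<Rightarrow> nat \<Rightarrow> real" where
  "W_F pa R mu0 Mstar \<pi>M M' h =
    (SUP f\<in>testF pa.
       measure_pmf.expectation
         (pair_pmf (state_dist pa mu0 Mstar \<pi>M h) (pmf_of_set (UNIV :: 'a set)))
         (\<lambda>(x, a). measure_pmf.expectation (step_pmf pa R M' h x a) (\<lambda>(r, x'). f h x a r x')
                 - measure_pmf.expectation (step_pmf pa R Mstar h x a) (\<lambda>(r, x'). f h x a r x')))"

text \<open>Empirical estimate from data D(i) = (x_h^(i), a_h^(i), r_h^(i), x_{h+1}^(i)), i < n.\<close>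
definition W_F_hat :: "('d::finite \<Rightarrow> 'd set) \<Rightarrow> ('d,'o,'a) rewardfn \<Rightarrow> ('d,'o,'a) model \<Rightarrow> nat
    \<Rightarrow> nat \<Rightarrow> (nat \<Rightarrow> ('d \<Rightarrow> 'o) \<times> 'a \<times> real \<times> ('d \<Rightarrow> 'o)) \<Rightarrow> real" where
  "W_F_hat pa R M' h n D =
    (SUP f\<in>testF pa. (1 / real n) * (\<Sum>i<n. case D i of (x, a, r, x') \<Rightarrow>
        measure_pmf.expectation (step_pmf pa R M' h x a) (\<lambda>(r', x''). f h x a r' x'')
        - f h x a r x'))"

definition sample_pmf :: "('d::finite \<Rightarrow> 'd set) \<Rightarrow> ('d,'o,'a::finite) rewardfn \<Rightarrow> ('d \<Rightarrow> 'o) pmf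
    \<Rightarrow> ('d,'o,'a) model \<Rightarrow> ('d,'o,'a) policy \<Rightarrow> nat \<Rightarrow> (('d \<Rightarrow> 'o) \<times> 'a \<times> real \<times> ('d \<Rightarrow> 'o)) pmf" where
  "sample_pmf pa R mu0 Mstar \<pi>M h =
     do { x \<leftarrow> state_dist pa mu0 Mstar \<pi>M h;
          a \<leftarrow> pmf_of_set (UNIV :: 'a set);
          (r, x') \<leftarrow> step_pmf pa R Mstar h x a;
          return_pmf (x, a, r, x') }"

definition dataset_pmf :: "nat \<Rightarrow> 'b pmf \<Rightarrow> (nat \<Rightarrow> 'b) pmf" where
  "dataset_pmf n p = Pi_pmf {..<n} undefined (\<lambda>_. p)"

definition Lparam :: "nat \<Rightarrow> ('d::finite \<Rightarrow> 'd set) \<Rightarrow> 'o itself \<Rightarrow> 'a itself \<Rightarrow> real" where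
  "Lparam H pa (_ :: 'o itself) (_ :: 'a itself) =
     (\<Sum>i\<in>UNIV. real H * real CARD('a) * real CARD('o) ^ (1 + card (pa i)))"

end

theory Submission
  imports Defs
begin

(* Every test function is a sum over the factors j of {-1,1}-valued functions of the feature
   (x[pa_j], a, x'[j]), which ranges over a finite set Z_j.  Hence, for every model M' and every
   test function, the empirical and the population mean of the residual "predicted minus
   observed" differ by at most twice the sum over j of the L1 distance between the empirical and
   the true distribution of the j-th feature; taking suprema over the test class bounds
   |W_F_hat - W_F| uniformly in M'.  The L1 distance on Z_j exceeds t only if the empirical mean
   of one of the 2^|Z_j| sign patterns on Z_j exceeds its expectation by t, which by Hoeffding's
   inequality has probability at most exp(-n t^2/2).  A union bound with t = phi/(2d), together
   with sum_j |Z_j| <= L, gives failure probability at most delta.  Nothing is assumed about the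
   policy collecting the data. *)

lemma prob_emp_mean_ge_le:
  fixes p :: "'b pmf" and Y :: "'b \<Rightarrow> real"
  assumes Y: "\<And>x. Y x \<in> {-1..1}" and t: "t \<ge> 0"
  shows "measure_pmf.prob (Pi_pmf {..<n} dflt (\<lambda>_. p))
           {D. (\<Sum>i<n. Y (D i)) / real n \<ge> measure_pmf.expectation p Y + t}
         \<le> exp (- real n * t\<^sup>2 / 2)"
proof (cases "n = 0")
  case False
  define P where "P = Pi_pmf {..<n} dflt (\<lambda>_. p)"
  have mean: "measure_pmf.expectation P (\<lambda>D. Y (D i)) = measure_pmf.expectation p Y" if "i < n" for i
    using that by (simp add: P_def Pi_pmf_component flip: integral_map_pmf[of "\<lambda>D. D i"])
  interpret Hoeffding_ineq "measure_pmf P" "{..<n}" "\<lambda>i D. Y (D i)" "\<lambda>_. -1" "\<lambda>_. 1"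
     "(\<Sum>i<n. measure_pmf.expectation P (\<lambda>D. Y (D i)))"
  proof unfold_locales
    show "prob_space.indep_vars (measure_pmf P) (\<lambda>_. borel) (\<lambda>i D. Y (D i)) {..<n}"
      unfolding P_def
      by (intro prob_space.indep_vars_compose2[OF _ indep_vars_Pi_pmf])
         (auto simp: measure_pmf.prob_space_axioms)
  qed (use Y in auto)
  have "(\<Sum>i<n. measure_pmf.expectation P (\<lambda>D. Y (D i))) = real n * measure_pmf.expectation p Y"
    using mean by simp
  then have "{D. (\<Sum>i<n. Y (D i)) / real n \<ge> measure_pmf.expectation p Y + t}
      = {D \<in> space (measure_pmf P). (\<Sum>i<n. Y (D i)) \<ge> (\<Sum>i<n. measure_pmf.expectation P (\<lambda>D. Y (D i))) + real n * t}"
    using False by (auto simp: field_simps)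
  also have "measure_pmf.prob P \<dots> \<le> exp (-2 * (real n * t)\<^sup>2 / (\<Sum>i<n. (1 - (-1::real))\<^sup>2))"
    using False t by (intro Hoeffding_ineq_ge) auto
  also have "\<dots> = exp (- real n * t\<^sup>2 / 2)"
    using False by (simp add: power2_eq_square field_simps)
  finally show ?thesis unfolding P_def .
qed simp

lemma abs_expectation_le:
  fixes f :: "'b \<Rightarrow> real"
  assumes "\<And>x. \<bar>f x\<bar> \<le> B"
  shows "\<bar>measure_pmf.expectation p f\<bar> \<le> B"
proof -
  have "integrable (measure_pmf p) f"
    using assms by (intro measure_pmf.integrable_const_bound[where B=B]) auto
  then have "measure_pmf.expectation p (\<lambda>x. \<bar>f x\<bar>) \<le> B"
    using assms by (intro measure_pmf.integral_le_const) auto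
  then show ?thesis
    using integral_abs_bound[of p f] by linarith
qed

lemma expectation_bind_pmf:
  fixes f :: "'c \<Rightarrow> real"
  assumes "\<And>x. \<bar>f x\<bar> \<le> B"
  shows "measure_pmf.expectation (bind_pmf p q) f
       = measure_pmf.expectation p (\<lambda>x. measure_pmf.expectation (q x) f)"
  unfolding measure_pmf_bind
proof (rule integral_bind[where K="count_space UNIV" and B=B and B'=1])
  show "(\<lambda>x. measure_pmf (q x)) \<in> measurable (measure_pmf p) (subprob_algebra (count_space UNIV))"
    using measurable_measure_pmf[of q] by (simp add: measurable_def)
qed (auto intro: assms measure_pmf.finite_measure_axioms simp: measure_pmf.emeasure_space_1)

lemma abs_cSUP_diff_le:
  fixes X Y :: "'f \<Rightarrow> real"
  assumes "A \<noteq> {}" "bdd_above (Y ` A)" "\<And>f. f \<in> A \<Longrightarrow> \<bar>X f - Y f\<bar> \<le> c"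
  shows "\<bar>(SUP f\<in>A. X f) - (SUP f\<in>A. Y f)\<bar> \<le> c"
proof -
  have "bdd_above (X ` A)"
    using assms(2,3) by (auto simp: bdd_above_def abs_diff_le_iff intro: order.trans[OF _ add_right_mono])
  have "(SUP f\<in>A. X f) \<le> (SUP f\<in>A. Y f) + c" "(SUP f\<in>A. Y f) \<le> (SUP f\<in>A. X f) + c"
    using assms(3) cSUP_upper[OF _ \<open>bdd_above (X ` A)\<close>] cSUP_upper[OF _ assms(2)]
    by (fastforce intro!: cSUP_least[OF assms(1)] simp: abs_diff_le_iff)+
  then show ?thesis
    by linarith
qed

lemma sum_power2_le_power2_sum:
  assumes "finite A" "\<And>j. j \<in> A \<Longrightarrow> m j > 0"
  shows "(\<Sum>j\<in>A. (2::real) ^ m j) \<le> 2 ^ (\<Sum>j\<in>A. m j)"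
  using assms
proof (induction A rule: finite_induct)
  case (insert x F)
  show ?case
  proof (cases "F = {}")
    case False
    then obtain y where "y \<in> F"
      by blast
    then have "0 < sum m F"
      using insert member_le_sum[of y F m] by fastforce
    then have "(2::real) \<le> 2 ^ m x" "(2::real) \<le> 2 ^ sum m F"
      using insert by (auto intro!: self_le_power)
    then have "1 * 1 \<le> ((2::real) ^ m x - 1) * (2 ^ sum m F - 1)"
      by (intro mult_mono) auto
    with insert show ?thesis
      by (simp add: power_add algebra_simps)
  qed simp
qed simp

definition emp_freq :: "('b \<Rightarrow> 'z) \<Rightarrow> nat \<Rightarrow> (nat \<Rightarrow> 'b) \<Rightarrow> 'z \<Rightarrow> real" where
  "emp_freq feat n D z = (\<Sum>i<n. if feat (D i) = z then 1 else 0) / real n"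

definition l1_deviation :: "'z set \<Rightarrow> 'b pmf \<Rightarrow> ('b \<Rightarrow> 'z) \<Rightarrow> nat \<Rightarrow> (nat \<Rightarrow> 'b) \<Rightarrow> real" where
  "l1_deviation Z p feat n D = (\<Sum>z\<in>Z. \<bar>emp_freq feat n D z - pmf (map_pmf feat p) z\<bar>)"

lemma emp_mean_eq_sum_emp_freq:
  assumes "finite Z" "range feat \<subseteq> Z"
  shows "(\<Sum>i<n. G (feat (D i))) / real n = (\<Sum>z\<in>Z. emp_freq feat n D z * G z)"
proof -
  have "(\<Sum>i<n. G (feat (D i))) = (\<Sum>i<n. \<Sum>z\<in>Z. if feat (D i) = z then G z else 0)"
    using assms by (intro sum.cong) auto
  also have "\<dots> = (\<Sum>z\<in>Z. (\<Sum>i<n. if feat (D i) = z then 1 else 0) * G z)"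
    by (subst sum.swap) (auto simp: sum_distrib_right intro!: sum.cong)
  finally show ?thesis
    by (simp only: emp_freq_def times_divide_eq_left sum_divide_distrib[symmetric])
qed

lemma expectation_eq_sum_pmf_map:
  fixes G :: "'z \<Rightarrow> real"
  assumes "finite Z" "range feat \<subseteq> Z"
  shows "measure_pmf.expectation p (\<lambda>x. G (feat x)) = (\<Sum>z\<in>Z. pmf (map_pmf feat p) z * G z)"
  using integral_measure_pmf_real[of Z "map_pmf feat p" G] assms by (auto simp: mult.commute)

lemma emp_mean_minus_expectation_eq:
  fixes G :: "'z \<Rightarrow> real"
  assumes "finite Z" "range feat \<subseteq> Z"
  shows "(\<Sum>i<n. G (feat (D i))) / real n - measure_pmf.expectation p (\<lambda>x. G (feat x))
       = (\<Sum>z\<in>Z. (emp_freq feat n D z - pmf (map_pmf feat p) z) * G z)"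
  unfolding emp_mean_eq_sum_emp_freq[OF assms] expectation_eq_sum_pmf_map[OF assms]
  by (simp add: left_diff_distrib sum_subtractf)

lemma abs_emp_mean_minus_expectation_le:
  fixes G :: "'z \<Rightarrow> real"
  assumes "finite Z" "range feat \<subseteq> Z" "\<And>z. z \<in> Z \<Longrightarrow> \<bar>G z\<bar> \<le> c"
  shows "\<bar>(\<Sum>i<n. G (feat (D i))) / real n - measure_pmf.expectation p (\<lambda>x. G (feat x))\<bar>
       \<le> c * l1_deviation Z p feat n D"
proof -
  have "\<bar>\<Sum>z\<in>Z. (emp_freq feat n D z - pmf (map_pmf feat p) z) * G z\<bar>
      \<le> (\<Sum>z\<in>Z. \<bar>emp_freq feat n D z - pmf (map_pmf feat p) z\<bar> * c)"
    by (rule order.trans[OF sum_abs sum_mono]) (simp add: abs_mult assms(3) mult_left_mono)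
  then show ?thesis
    by (simp add: emp_mean_minus_expectation_eq[OF assms(1,2)] l1_deviation_def
        sum_distrib_left mult.commute)
qed

lemma l1_deviation_le_2:
  assumes "finite Z" "range feat \<subseteq> Z"
  shows "l1_deviation Z p feat n D \<le> 2"
proof -
  have "l1_deviation Z p feat n D \<le> (\<Sum>z\<in>Z. emp_freq feat n D z * 1) + (\<Sum>z\<in>Z. pmf (map_pmf feat p) z * 1)"
    unfolding l1_deviation_def sum.distrib[symmetric]
    by (intro sum_mono) (simp add: emp_freq_def abs_diff_le_iff sum_nonneg add_increasing)
  also have "\<dots> = real (card {..<n}) / real n + 1"
    using emp_mean_eq_sum_emp_freq[OF assms, of "\<lambda>_. 1"] expectation_eq_sum_pmf_map[OF assms, of p "\<lambda>_. 1"]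
    by simp
  also have "\<dots> \<le> 2" by simp
  finally show ?thesis .
qed

lemma prob_l1_deviation_gt_le:
  fixes p :: "'b pmf" and feat :: "'b \<Rightarrow> 'z"
  assumes Z: "finite Z" "range feat \<subseteq> Z" and t: "t \<ge> 0"
  shows "measure_pmf.prob (Pi_pmf {..<n} dflt (\<lambda>_. p)) {D. l1_deviation Z p feat n D > t}
     \<le> 2 ^ card Z * exp (- real n * t\<^sup>2 / 2)"
proof -
  define P where "P = Pi_pmf {..<n} dflt (\<lambda>_. p)"
  define signs where "signs = Z \<rightarrow>\<^sub>E {-1, 1::real}"
  define A where "A s = {D. (\<Sum>i<n. s (feat (D i))) / real n \<ge> measure_pmf.expectation p (\<lambda>x. s (feat x)) + t}" for s
  have "{D. l1_deviation Z p feat n D > t} \<subseteq> (\<Union>s\<in>signs. A s)"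
  proof
    fix D assume "D \<in> {D. l1_deviation Z p feat n D > t}"
    define s where "s = (\<lambda>z\<in>Z. if emp_freq feat n D z \<ge> pmf (map_pmf feat p) z then 1 else (-1::real))"
    have "l1_deviation Z p feat n D = (\<Sum>z\<in>Z. (emp_freq feat n D z - pmf (map_pmf feat p) z) * s z)"
      unfolding l1_deviation_def s_def by (intro sum.cong refl) auto
    also have "\<dots> = (\<Sum>i<n. s (feat (D i))) / real n - measure_pmf.expectation p (\<lambda>x. s (feat x))"
      by (rule emp_mean_minus_expectation_eq[OF Z, symmetric])
    finally have "D \<in> A s" using \<open>D \<in> _\<close> unfolding A_def by simp
    moreover have "s \<in> signs" unfolding s_def signs_def by auto
    ultimately show "D \<in> (\<Union>s\<in>signs. A s)" by blast
  qed
  then have "measure_pmf.prob P {D. l1_deviation Z p feat n D > t} \<le> measure_pmf.prob P (\<Union>s\<in>signs. A s)"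
    by (intro measure_pmf.finite_measure_mono) auto
  also have "\<dots> \<le> (\<Sum>s\<in>signs. measure_pmf.prob P (A s))"
    using Z(1) by (intro measure_pmf.finite_measure_subadditive_finite) (auto simp: signs_def finite_PiE)
  also have "\<dots> \<le> (\<Sum>s\<in>signs. exp (- real n * t\<^sup>2 / 2))"
  proof (rule sum_mono)
    fix s assume s: "s \<in> signs"
    have sign: "s (feat x) \<in> {-1, 1}" for x
      using PiE_mem[OF s[unfolded signs_def]] Z(2) by blast
    have "s (feat x) \<in> {-1..1}" for x
      using sign[of x] by auto
    then show "measure_pmf.prob P (A s) \<le> exp (- real n * t\<^sup>2 / 2)"
      unfolding A_def P_def by (rule prob_emp_mean_ge_le[OF _ t])
  qed
  also have "\<dots> = 2 ^ card Z * exp (- real n * t\<^sup>2 / 2)"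
    using Z(1) by (simp add: signs_def card_PiE)
  finally show ?thesis unfolding P_def .
qed

lemma prob_all_l1_deviation_le:
  fixes Z :: "'j \<Rightarrow> 'z set" and feat :: "'j \<Rightarrow> 'b \<Rightarrow> 'z"
  assumes J: "finite J" and Z: "\<And>j. j \<in> J \<Longrightarrow> finite (Z j)" "\<And>j. j \<in> J \<Longrightarrow> range (feat j) \<subseteq> Z j"
    and t: "t \<ge> 0"
  shows "measure_pmf.prob (Pi_pmf {..<n} dflt (\<lambda>_. p)) {D. \<forall>j\<in>J. l1_deviation (Z j) p (feat j) n D \<le> t}
     \<ge> 1 - (\<Sum>j\<in>J. 2 ^ card (Z j)) * exp (- real n * t\<^sup>2 / 2)"
proof -
  define P where "P = Pi_pmf {..<n} dflt (\<lambda>_. p)"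
  have "measure_pmf.prob P (- {D. \<forall>j\<in>J. l1_deviation (Z j) p (feat j) n D \<le> t})
      = measure_pmf.prob P (\<Union>j\<in>J. {D. l1_deviation (Z j) p (feat j) n D > t})"
    by (rule arg_cong[where f="measure_pmf.prob P"]) auto
  also have "\<dots> \<le> (\<Sum>j\<in>J. measure_pmf.prob P {D. l1_deviation (Z j) p (feat j) n D > t})"
    using J by (intro measure_pmf.finite_measure_subadditive_finite) auto
  also have "\<dots> \<le> (\<Sum>j\<in>J. 2 ^ card (Z j) * exp (- real n * t\<^sup>2 / 2))"
    unfolding P_def using Z t by (intro sum_mono prob_l1_deviation_gt_le) auto
  finally show ?thesis
    using measure_pmf.prob_compl[of "{D. \<forall>j\<in>J. l1_deviation (Z j) p (feat j) n D \<le> t}" P]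
    by (simp add: P_def sum_distrib_right Compl_eq_Diff_UNIV)
qed

definition feature :: "('d::finite \<Rightarrow> 'd set) \<Rightarrow> 'd
    \<Rightarrow> ('d \<Rightarrow> 'o) \<times> 'a \<times> real \<times> ('d \<Rightarrow> 'o) \<Rightarrow> ('d \<Rightarrow> 'o) \<times> 'a \<times> 'o" where
  "feature pa j s = (case s of (x, a, r, x') \<Rightarrow> (proj (pa j) x, a, x' j))"

definition feature_space :: "('d::finite \<Rightarrow> 'd set) \<Rightarrow> 'd \<Rightarrow> (('d \<Rightarrow> 'o) \<times> 'a \<times> 'o) set" where
  "feature_space pa j = range (proj (pa j)) \<times> UNIV \<times> UNIV"

lemma range_feature_subset: "range (feature pa j) \<subseteq> feature_space pa j"
  by (auto simp: feature_def feature_space_def split: prod.splits)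

lemma card_feature_space_le:
  "card (feature_space pa j :: (('d::finite \<Rightarrow> 'o::finite) \<times> 'a::finite \<times> 'o) set)
     \<le> CARD('o) ^ card (pa j) * CARD('a) * CARD('o)"
proof -
  have "range (proj (pa j) :: ('d \<Rightarrow> 'o) \<Rightarrow> _) \<subseteq> pa j \<rightarrow>\<^sub>E UNIV"
    by (auto simp: proj_def)
  then have "card (range (proj (pa j) :: ('d \<Rightarrow> 'o) \<Rightarrow> _)) \<le> CARD('o) ^ card (pa j)"
    using card_mono[of "pa j \<rightarrow>\<^sub>E (UNIV :: 'o set)"] by (simp add: card_PiE finite_PiE)
  then show ?thesis
    by (simp add: feature_space_def card_cartesian_product)
qed

lemma card_feature_space_pos:
  "card (feature_space pa j :: (('d::finite \<Rightarrow> 'o::finite) \<times> 'a::finite \<times> 'o) set) > 0"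
  by (simp add: feature_space_def card_gt_0_iff)

lemma sum_card_feature_space_le_Lparam:
  assumes "H \<ge> 1"
  shows "real (\<Sum>j\<in>UNIV. card (feature_space pa j :: (('d::finite \<Rightarrow> 'o::finite) \<times> 'a::finite \<times> 'o) set))
     \<le> Lparam H pa TYPE('o) TYPE('a)"
proof -
  have "real (card (feature_space pa j :: (('d \<Rightarrow> 'o) \<times> 'a \<times> 'o) set))
      \<le> real H * real CARD('a) * real CARD('o) ^ (1 + card (pa j))" for j
  proof -
    have "real (card (feature_space pa j :: (('d \<Rightarrow> 'o) \<times> 'a \<times> 'o) set))
        \<le> real CARD('a) * real CARD('o) ^ (1 + card (pa j))"
      using card_feature_space_le[of pa j, where 'o='o and 'a='a] of_nat_mono by (fastforce simp: algebra_simps)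
    also have "\<dots> \<le> real H * (real CARD('a) * real CARD('o) ^ (1 + card (pa j)))"
      using assms by (simp add: mult_le_cancel_right1 mult_less_0_iff)
    finally show ?thesis by (simp add: mult.assoc)
  qed
  then show ?thesis
    unfolding Lparam_def of_nat_sum by (rule sum_mono)
qed

lemma map_pmf_trans_component: "map_pmf (\<lambda>x'. x' j) (trans pa M h x a) = M j h (proj (pa j) x) a"
  by (simp add: trans_def Pi_pmf_component)

lemma expectation_step_pmf_sum_components:
  fixes G :: "'d::finite \<Rightarrow> 'o::finite \<Rightarrow> real"
  shows "measure_pmf.expectation (step_pmf pa R M h x a) (\<lambda>(r, x'). \<Sum>j\<in>UNIV. G j (x' j))
       = (\<Sum>j\<in>UNIV. measure_pmf.expectation (M j h (proj (pa j) x) a) (G j))"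
proof -
  have "measure_pmf.expectation (step_pmf pa R M h x a) (\<lambda>(r, x'). \<Sum>j\<in>UNIV. G j (x' j))
      = measure_pmf.expectation (map_pmf snd (step_pmf pa R M h x a)) (\<lambda>x'. \<Sum>j\<in>UNIV. G j (x' j))"
    by (simp add: case_prod_unfold)
  also have "\<dots> = (\<Sum>j\<in>UNIV. measure_pmf.expectation (trans pa M h x a) (\<lambda>x'. G j (x' j)))"
    by (simp add: step_pmf_def map_snd_pair_pmf integrable_measure_pmf_finite)
  also have "\<dots> = (\<Sum>j\<in>UNIV. measure_pmf.expectation (M j h (proj (pa j) x) a) (G j))"
    by (simp flip: map_pmf_trans_component)
  finally show ?thesis .
qed

definition factor_residual :: "('d, 'o, 'a) model \<Rightarrow> ('d \<Rightarrow> nat \<Rightarrow> ('d \<Rightarrow> 'o) \<Rightarrow> 'a \<Rightarrow> 'o \<Rightarrow> real)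
    \<Rightarrow> nat \<Rightarrow> 'd \<Rightarrow> ('d \<Rightarrow> 'o) \<times> 'a \<times> 'o \<Rightarrow> real" where
  "factor_residual M' g h j z =
     (case z of (y, a, ob) \<Rightarrow> measure_pmf.expectation (M' j h y a) (g j h y a) - g j h y a ob)"

type_synonym ('d, 'o, 'a) test_fn = "nat \<Rightarrow> ('d \<Rightarrow> 'o) \<Rightarrow> 'a \<Rightarrow> real \<Rightarrow> ('d \<Rightarrow> 'o) \<Rightarrow> real"

definition test_residual :: "('d::finite \<Rightarrow> 'd set) \<Rightarrow> ('d, 'o, 'a) rewardfn \<Rightarrow> ('d, 'o, 'a) model
    \<Rightarrow> nat \<Rightarrow> ('d, 'o, 'a) test_fn \<Rightarrow> ('d \<Rightarrow> 'o) \<times> 'a \<times> real \<times> ('d \<Rightarrow> 'o) \<Rightarrow> real" where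
  "test_residual pa R M' h f s = (case s of (x, a, r, x') \<Rightarrow>
     measure_pmf.expectation (step_pmf pa R M' h x a) (\<lambda>(r', x''). f h x a r' x'') - f h x a r x')"

lemma abs_factor_residual_le:
  assumes "\<forall>i h y a ob. g i h y a ob \<in> {-1, 1}"
  shows "\<bar>factor_residual M' g h j z\<bar> \<le> 2"
proof -
  have g: "\<bar>g j h y a ob\<bar> \<le> 1" for y a ob
    using assms[rule_format, of j h y a ob] by auto
  then have E: "\<bar>measure_pmf.expectation (M' j h y a) (g j h y a)\<bar> \<le> 1" for y a
    by (intro abs_expectation_le)
  obtain y a ob where z: "z = (y, a, ob)"
    by (cases z) auto
  show ?thesis
    using g[of y a ob] E[of y a] unfolding z factor_residual_def by (simp add: abs_le_iff)
qed

lemma abs_testF_le: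
  fixes pa :: "'d::finite \<Rightarrow> 'd set"
  assumes "f \<in> testF pa"
  shows "\<bar>f h x a r x'\<bar> \<le> real CARD('d)"
proof -
  obtain g where g: "\<forall>i h y a ob. g i h y a ob \<in> {-1, 1}"
    and f: "f = (\<lambda>h x a r x'. \<Sum>i\<in>UNIV. g i h (proj (pa i) x) a (x' i))"
    using assms unfolding testF_def by blast
  have g1: "\<bar>g i h y a ob\<bar> \<le> 1" for i y a ob
    using g[rule_format, of i h y a ob] by auto
  have "\<bar>\<Sum>i\<in>UNIV. g i h (proj (pa i) x) a (x' i)\<bar> \<le> (\<Sum>i\<in>(UNIV :: 'd set). 1)"
    by (rule order.trans[OF sum_abs sum_mono]) (rule g1)
  then show ?thesis
    by (simp add: f)
qed

lemma abs_test_residual_le: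
  fixes pa :: "'d::finite \<Rightarrow> 'd set"
  assumes "f \<in> testF pa"
  shows "\<bar>test_residual pa R M' h f s\<bar> \<le> 2 * real CARD('d)"
proof -
  obtain x a r x' where s: "s = (x, a, r, x')"
    by (cases s) auto
  have "\<bar>measure_pmf.expectation (step_pmf pa R M' h x a) (\<lambda>(r', x''). f h x a r' x'')\<bar> \<le> real CARD('d)"
    using abs_testF_le[OF assms] by (intro abs_expectation_le) (simp split: prod.splits)
  then show ?thesis
    using abs_testF_le[OF assms, of h x a r x'] by (simp add: test_residual_def s abs_le_iff)
qed

lemma test_residual_eq_sum_factor_residual:
  fixes pa :: "'d::finite \<Rightarrow> 'd set" and g :: "'d \<Rightarrow> nat \<Rightarrow> ('d \<Rightarrow> 'o::finite) \<Rightarrow> 'a \<Rightarrow> 'o \<Rightarrow> real"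
  shows "test_residual pa R M' h (\<lambda>h x a r x'. \<Sum>i\<in>UNIV. g i h (proj (pa i) x) a (x' i)) s
       = (\<Sum>j\<in>UNIV. factor_residual M' g h j (feature pa j s))"
proof -
  obtain x a r x' where s: "s = (x, a, r, x')"
    by (cases s) auto
  show ?thesis
    using expectation_step_pmf_sum_components[of pa R M' h x a "\<lambda>j. g j h (proj (pa j) x) a"]
    by (simp add: s test_residual_def factor_residual_def feature_def sum_subtractf)
qed

lemma sample_pmf_eq_bind_pair_pmf:
  "sample_pmf pa R mu0 Mstar \<pi>M h =
     pair_pmf (state_dist pa mu0 Mstar \<pi>M h) (pmf_of_set UNIV)
       \<bind> (\<lambda>(x, a). map_pmf (\<lambda>w. (x, a, w)) (step_pmf pa R Mstar h x a))"
  by (simp add: sample_pmf_def pair_pmf_def bind_assoc_pmf bind_return_pmf map_pmf_def case_prod_unfold)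

lemma expectation_sample_pmf:
  fixes F :: "('d::finite \<Rightarrow> 'o) \<times> 'a::finite \<times> real \<times> ('d \<Rightarrow> 'o) \<Rightarrow> real"
  assumes "\<And>s. \<bar>F s\<bar> \<le> B"
  shows "measure_pmf.expectation (sample_pmf pa R mu0 Mstar \<pi>M h) F
       = measure_pmf.expectation (pair_pmf (state_dist pa mu0 Mstar \<pi>M h) (pmf_of_set UNIV))
           (\<lambda>(x, a). measure_pmf.expectation (step_pmf pa R Mstar h x a) (\<lambda>w. F (x, a, w)))"
  unfolding sample_pmf_eq_bind_pair_pmf
  by (subst expectation_bind_pmf[OF assms]) (simp add: case_prod_unfold)

lemma W_F_eq_SUP_expectation_test_residual:
  fixes pa :: "'d::finite \<Rightarrow> 'd set" and R :: "('d, 'o, 'a::finite) rewardfn"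
  shows "W_F pa R mu0 Mstar \<pi>M M' h
     = (SUP f\<in>testF pa. measure_pmf.expectation (sample_pmf pa R mu0 Mstar \<pi>M h) (test_residual pa R M' h f))"
  unfolding W_F_def
proof (intro SUP_cong refl)
  fix f :: "('d, 'o, 'a) test_fn"
  assume f: "f \<in> testF pa"
  have "measure_pmf.expectation (step_pmf pa R Mstar h x a) (\<lambda>w. test_residual pa R M' h f (x, a, w))
      = measure_pmf.expectation (step_pmf pa R M' h x a) (\<lambda>(r, x'). f h x a r x')
        - measure_pmf.expectation (step_pmf pa R Mstar h x a) (\<lambda>(r, x'). f h x a r x')" for x a
  proof -
    have "integrable (step_pmf pa R Mstar h x a) (\<lambda>(r, x'). f h x a r x')"
      using abs_testF_le[OF f] by (intro measure_pmf.integrable_const_bound[where B="real CARD('d)"]) (auto split: prod.splits)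
    then show ?thesis
      by (simp add: test_residual_def case_prod_unfold)
  qed
  then show "measure_pmf.expectation (pair_pmf (state_dist pa mu0 Mstar \<pi>M h) (pmf_of_set UNIV))
         (\<lambda>(x, a). measure_pmf.expectation (step_pmf pa R M' h x a) (\<lambda>(r, x'). f h x a r x')
                 - measure_pmf.expectation (step_pmf pa R Mstar h x a) (\<lambda>(r, x'). f h x a r x'))
      = measure_pmf.expectation (sample_pmf pa R mu0 Mstar \<pi>M h) (test_residual pa R M' h f)"
    by (simp add: expectation_sample_pmf[OF abs_test_residual_le[OF f]])
qed

lemma W_F_hat_eq_SUP_emp_mean_test_residual:
  "W_F_hat pa R M' h n D = (SUP f\<in>testF pa. (\<Sum>i<n. test_residual pa R M' h f (D i)) / real n)"
  by (simp add: W_F_hat_def test_residual_def)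

lemma testF_nonempty: "testF pa \<noteq> {}"
  unfolding testF_def by (auto intro!: exI[where x="\<lambda>i h y a ob. 1"])

lemma abs_emp_mean_minus_expectation_test_residual_le:
  fixes pa :: "'d::finite \<Rightarrow> 'd set" and R :: "('d, 'o::finite, 'a::finite) rewardfn"
    and S :: "(('d \<Rightarrow> 'o) \<times> 'a \<times> real \<times> ('d \<Rightarrow> 'o)) pmf"
  assumes "f \<in> testF pa"
  shows "\<bar>(\<Sum>i<n. test_residual pa R M' h f (D i)) / real n - measure_pmf.expectation S (test_residual pa R M' h f)\<bar>
     \<le> 2 * (\<Sum>j\<in>UNIV. l1_deviation (feature_space pa j) S (feature pa j) n D)"
proof -
  obtain g where g: "\<forall>i h y a ob. g i h y a ob \<in> {-1, 1}"
    and f: "f = (\<lambda>h x a r x'. \<Sum>i\<in>UNIV. g i h (proj (pa i) x) a (x' i))"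
    using assms unfolding testF_def by blast
  define G where "G j = factor_residual M' g h j" for j
  have G: "\<bar>G j z\<bar> \<le> 2" for j z
    unfolding G_def by (rule abs_factor_residual_le[OF g])
  have residual: "test_residual pa R M' h f = (\<lambda>s. \<Sum>j\<in>UNIV. G j (feature pa j s))"
    unfolding f G_def by (rule ext, rule test_residual_eq_sum_factor_residual)
  have "integrable S (\<lambda>s. G j (feature pa j s))" for j
    using G by (intro measure_pmf.integrable_const_bound[where B=2]) auto
  then have "(\<Sum>i<n. test_residual pa R M' h f (D i)) / real n - measure_pmf.expectation S (test_residual pa R M' h f)
      = (\<Sum>j\<in>UNIV. (\<Sum>i<n. G j (feature pa j (D i))) / real n
                     - measure_pmf.expectation S (\<lambda>s. G j (feature pa j s)))"
    unfolding residual by (simp add: sum.swap[of _ "{..<n}"] sum_divide_distrib sum_subtractf)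
  also have "\<bar>\<dots>\<bar> \<le> (\<Sum>j\<in>UNIV. 2 * l1_deviation (feature_space pa j) S (feature pa j) n D)"
    using G by (intro order.trans[OF sum_abs sum_mono] abs_emp_mean_minus_expectation_le)
       (auto simp: range_feature_subset)
  finally show ?thesis
    by (simp add: sum_distrib_left)
qed

lemma abs_W_F_hat_minus_W_F_le:
  fixes pa :: "'d::finite \<Rightarrow> 'd set"
    and R :: "('d, 'o::finite, 'a::finite) rewardfn"
    and mu0 :: "('d \<Rightarrow> 'o) pmf" and Mstar :: "('d, 'o, 'a) model"
    and \<pi>M :: "('d, 'o, 'a) policy" and h :: nat
  defines "S \<equiv> sample_pmf pa R mu0 Mstar \<pi>M h"
  shows "\<bar>W_F_hat pa R M' h n D - W_F pa R mu0 Mstar \<pi>M M' h\<bar>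
     \<le> 2 * (\<Sum>j\<in>UNIV. l1_deviation (feature_space pa j) S (feature pa j) n D)"
  unfolding W_F_hat_eq_SUP_emp_mean_test_residual W_F_eq_SUP_expectation_test_residual S_def[symmetric]
proof (rule abs_cSUP_diff_le[OF testF_nonempty _ abs_emp_mean_minus_expectation_test_residual_le])
  show "bdd_above ((\<lambda>f. measure_pmf.expectation S (test_residual pa R M' h f)) ` testF pa)"
  proof (rule bdd_aboveI2)
    fix f :: "('d, 'o, 'a) test_fn"
    assume "f \<in> testF pa"
    then have "\<bar>measure_pmf.expectation S (test_residual pa R M' h f)\<bar> \<le> 2 * real CARD('d)"
      by (intro abs_expectation_le abs_test_residual_le)
    then show "measure_pmf.expectation S (test_residual pa R M' h f) \<le> 2 * real CARD('d)"
      by simp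
  qed
qed

lemma abs_W_F_hat_minus_W_F_le_card:
  fixes pa :: "'d::finite \<Rightarrow> 'd set" and R :: "('d, 'o::finite, 'a::finite) rewardfn"
  shows "\<bar>W_F_hat pa R M' h n D - W_F pa R mu0 Mstar \<pi>M M' h\<bar> \<le> 4 * real CARD('d)"
proof -
  have "(\<Sum>j\<in>UNIV. l1_deviation (feature_space pa j) (sample_pmf pa R mu0 Mstar \<pi>M h) (feature pa j) n D)
      \<le> (\<Sum>j\<in>(UNIV :: 'd set). 2)"
    by (intro sum_mono l1_deviation_le_2 range_feature_subset) simp
  then show ?thesis
    by (intro order.trans[OF abs_W_F_hat_minus_W_F_le]) simp
qed

lemma prob_W_F_hat_close_ge:
  fixes pa :: "'d::finite \<Rightarrow> 'd set" and R :: "('d, 'o::finite, 'a::finite) rewardfn"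
  assumes "t \<ge> 0"
  shows "measure_pmf.prob (dataset_pmf n (sample_pmf pa R mu0 Mstar \<pi>M h))
           {D. \<forall>M' :: ('d, 'o, 'a) model.
                 \<bar>W_F_hat pa R M' h n D - W_F pa R mu0 Mstar \<pi>M M' h\<bar> \<le> 2 * real CARD('d) * t}
         \<ge> 1 - (\<Sum>j\<in>UNIV. 2 ^ card (feature_space pa j :: (('d \<Rightarrow> 'o) \<times> 'a \<times> 'o) set))
                 * exp (- real n * t\<^sup>2 / 2)"
proof -
  let ?dev = "\<lambda>j D. l1_deviation (feature_space pa j) (sample_pmf pa R mu0 Mstar \<pi>M h) (feature pa j) n D"
  have "1 - (\<Sum>j\<in>UNIV. 2 ^ card (feature_space pa j :: (('d \<Rightarrow> 'o) \<times> 'a \<times> 'o) set))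
               * exp (- real n * t\<^sup>2 / 2)
      \<le> measure_pmf.prob (dataset_pmf n (sample_pmf pa R mu0 Mstar \<pi>M h)) {D. \<forall>j\<in>UNIV. ?dev j D \<le> t}"
    unfolding dataset_pmf_def using assms by (intro prob_all_l1_deviation_le range_feature_subset) auto
  also have "\<dots> \<le> measure_pmf.prob (dataset_pmf n (sample_pmf pa R mu0 Mstar \<pi>M h))
           {D. \<forall>M' :: ('d, 'o, 'a) model.
                 \<bar>W_F_hat pa R M' h n D - W_F pa R mu0 Mstar \<pi>M M' h\<bar> \<le> 2 * real CARD('d) * t}"
  proof (intro measure_pmf.finite_measure_mono subsetI)
    fix D assume "D \<in> {D. \<forall>j\<in>UNIV. ?dev j D \<le> t}"
    then have "(\<Sum>j\<in>UNIV. ?dev j D) \<le> (\<Sum>j\<in>(UNIV :: 'd set). t)"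
      by (intro sum_mono) auto
    then show "D \<in> {D. \<forall>M' :: ('d, 'o, 'a) model.
                 \<bar>W_F_hat pa R M' h n D - W_F pa R mu0 Mstar \<pi>M M' h\<bar> \<le> 2 * real CARD('d) * t}"
      by (auto intro: order.trans[OF abs_W_F_hat_minus_W_F_le])
  qed simp
  finally show ?thesis .
qed

lemma two_power_mul_exp_le_of_sample_size:
  fixes d k \<phi> \<delta> L :: real and n N :: nat
  assumes d: "d \<ge> 1" and k: "k \<ge> 1" and \<phi>: "0 < \<phi>" "\<phi> < 4 * d" and \<delta>: "0 < \<delta>" and N: "real N \<le> L"
    and n: "real n \<ge> 8 * d\<^sup>2 * (L * ln (8 * d * k / \<phi>) + ln (2 / \<delta>)) / \<phi>\<^sup>2"
  shows "2 ^ N * exp (- real n * (\<phi> / (2 * d))\<^sup>2 / 2) \<le> \<delta>"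
proof -
  have "\<phi> \<le> 4 * d * k"
    using mult_left_mono[of 1 k "4 * d"] d k \<phi> by linarith
  then have "8 * d * k / \<phi> \<ge> 2"
    using \<phi> by (simp add: field_simps)
  then have "ln 2 \<le> ln (8 * d * k / \<phi>)"
    by simp
  then have "real N * ln 2 \<le> L * ln (8 * d * k / \<phi>)"
    using N by (intro mult_mono) auto
  also have "\<dots> \<le> real n * (\<phi> / (2 * d))\<^sup>2 / 2 - ln (2 / \<delta>)"
    using n d \<phi> by (simp add: field_simps power2_eq_square)
  finally have "real N * ln 2 - real n * (\<phi> / (2 * d))\<^sup>2 / 2 \<le> - ln (2 / \<delta>)"
    by linarith
  then have "exp (real N * ln 2 - real n * (\<phi> / (2 * d))\<^sup>2 / 2) \<le> exp (- ln (2 / \<delta>))"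
    by simp
  also have "\<dots> = \<delta> / 2"
    using \<delta> by (simp add: exp_minus)
  also have "exp (real N * ln 2 - real n * (\<phi> / (2 * d))\<^sup>2 / 2) = 2 ^ N * exp (- real n * (\<phi> / (2 * d))\<^sup>2 / 2)"
    by (simp add: exp_diff exp_minus exp_of_nat_mult field_simps)
  finally show ?thesis
    using \<delta> by linarith
qed

lemma sum_power2_card_feature_space_mul_exp_le:
  fixes pa :: "'d::finite \<Rightarrow> 'd set"
  assumes "H \<ge> 1" "0 < \<phi>" "\<phi> < 4 * real CARD('d)" "0 < \<delta>"
    and "real n \<ge> 8 * real CARD('d) ^ 2
              * (Lparam H pa TYPE('o::finite) TYPE('a::finite) * ln (8 * real CARD('d) * real CARD('o) / \<phi>)
                 + ln (2 / \<delta>)) / \<phi> ^ 2"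
  shows "(\<Sum>j\<in>UNIV. 2 ^ card (feature_space pa j :: (('d \<Rightarrow> 'o) \<times> 'a \<times> 'o) set))
           * exp (- real n * (\<phi> / (2 * real CARD('d)))\<^sup>2 / 2) \<le> \<delta>"
proof -
  have "(\<Sum>j\<in>UNIV. (2::real) ^ card (feature_space pa j :: (('d \<Rightarrow> 'o) \<times> 'a \<times> 'o) set))
      \<le> 2 ^ (\<Sum>j\<in>UNIV. card (feature_space pa j :: (('d \<Rightarrow> 'o) \<times> 'a \<times> 'o) set))"
    by (intro sum_power2_le_power2_sum card_feature_space_pos) simp
  also have "\<dots> * exp (- real n * (\<phi> / (2 * real CARD('d)))\<^sup>2 / 2) \<le> \<delta>"
    using assms sum_card_feature_space_le_Lparam[of H pa]
    by (intro two_power_mul_exp_le_of_sample_size[where k="real CARD('o)"]) auto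
  finally show ?thesis
    by (simp add: mult_right_mono)
qed

theorem mainTheorem9:
  fixes H :: nat and h :: nat and n :: nat
    and pa :: "'d::finite \<Rightarrow> 'd set"
    and R :: "('d, 'o::finite, 'a::finite) rewardfn"
    and mu0 :: "('d \<Rightarrow> 'o) pmf"
    and Mstar M :: "('d, 'o, 'a) model"
    and \<pi>M :: "('d, 'o, 'a) policy"
    and \<phi> \<delta> :: real
  assumes h: "h \<in> {1..H}"
    and piM: "greedy_optimal H pa R M \<pi>M"
    and phi: "\<phi> > 0" and delta: "\<delta> > 0"
    and n: "real n \<ge> 8 * real CARD('d) ^ 2
              * (Lparam H pa TYPE('o) TYPE('a) * ln (8 * real CARD('d) * real CARD('o) / \<phi>)
                 + ln (2 / \<delta>)) / \<phi> ^ 2"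
  shows "measure_pmf.prob (dataset_pmf n (sample_pmf pa R mu0 Mstar \<pi>M h))
           {D. \<forall>M' :: ('d, 'o, 'a) model.
                 \<bar>W_F_hat pa R M' h n D - W_F pa R mu0 Mstar \<pi>M M' h\<bar> \<le> \<phi>}
         \<ge> 1 - \<delta>"
proof (cases "4 * real CARD('d) \<le> \<phi>")
  case True
  \<comment> \<open>Then ln (8 d |O| / phi) may be negative and the sample-size hypothesis is void, but the
    deterministic bound 4 d suffices.\<close>
  then have "{D. \<forall>M' :: ('d, 'o, 'a) model.
                 \<bar>W_F_hat pa R M' h n D - W_F pa R mu0 Mstar \<pi>M M' h\<bar> \<le> \<phi>} = UNIV"
    using order.trans[OF abs_W_F_hat_minus_W_F_le_card] by blast
  then show ?thesis
    using delta by simp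
next
  case False
  define t where "t = \<phi> / (2 * real CARD('d))"
  have "(\<Sum>j\<in>UNIV. 2 ^ card (feature_space pa j :: (('d \<Rightarrow> 'o) \<times> 'a \<times> 'o) set))
          * exp (- real n * t\<^sup>2 / 2) \<le> \<delta>"
    unfolding t_def using h phi False delta n by (intro sum_power2_card_feature_space_mul_exp_le) auto
  then have "1 - \<delta> \<le> 1 - (\<Sum>j\<in>UNIV. 2 ^ card (feature_space pa j :: (('d \<Rightarrow> 'o) \<times> 'a \<times> 'o) set))
                    * exp (- real n * t\<^sup>2 / 2)"
    by linarith
  also have "\<dots> \<le> measure_pmf.prob (dataset_pmf n (sample_pmf pa R mu0 Mstar \<pi>M h))
           {D. \<forall>M' :: ('d, 'o, 'a) model.
                 \<bar>W_F_hat pa R M' h n D - W_F pa R mu0 Mstar \<pi>M M' h\<bar> \<le> 2 * real CARD('d) * t}"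
    using phi by (intro prob_W_F_hat_close_ge) (simp add: t_def)
  finally show ?thesis
    by (simp add: t_def)
qed

end
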